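(* Let $\mathbbm{k}$ be a field and $n\ge 2$. The ideal $J_n\subset R$ is a mesoprime binomial ideal whose associated lattice is $L'_n$; that is, \[J_n=\langle x^{u^+}-x^{u^-} : u\in L'_n\rangle,\] so that $R/J_n$ is the group-algebra-type quotient attached to $L'_n$ (the lattice ideal of $L'_n$).
   Context: $R=\mathbbm{k}[x_{ij}:1\le i\le j\le n]$ with the convention $x_{ij}=x_{ji}$; exponent vectors live in $\mathbb{N}^{\binom{n+1}{2}}$ with standard basis $e_{ij}$ ($e_{ij}=e_{ji}$). For $u\in\mathbb{Z}^{\binom{n+1}{2}}$, $u=u^+-u^-$ with $u^+,u^-\ge 0$ of disjoint support. $J_n$ is the ideal generated by all principal $2$-minors $x_{ii}x_{jj}-x_{ij}^2$ ($i,j\in[n]$) of the symmetric matrix $(x_{ij})$. For $i,j,k,l\in[n]$, $[ij|kl]:=e_{ik}+e_{jl}-e_{il}-e_{jk}$, and $L'_n$ is the lattice generated by the $[ij|ij]$, $i,j\in[n]$. (A mesoprime binomial ideal without monomials, in the sense of Kahle–Miller, with associated lattice $L$ and trivial character is exactly the lattice ideal $\langle x^{u^+}-x^{u^-}:u\in L\rangle$.) *)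

theory Defs
  imports "HOL-Library.Poly_Mapping"
begin

text \<open>Variables x_ij (1 <= i <= j <= n) are indexed by the canonical pair (min i j, max i j),
  which realises the convention x_ij = x_ji.\<close>

type_synonym 'k mpoly = "((nat \<times> nat) \<Rightarrow>\<^sub>0 nat) \<Rightarrow>\<^sub>0 'k"

definition cpair :: "nat \<Rightarrow> nat \<Rightarrow> nat \<times> nat" where
  "cpair i j = (min i j, max i j)"

definition Idx :: "nat \<Rightarrow> (nat \<times> nat) set" where
  "Idx n = {(i, j). 1 \<le> i \<and> i \<le> j \<and> j \<le> n}"

definition Rn :: "nat \<Rightarrow> 'k::field mpoly set" where
  "Rn n = {p. \<forall>a \<in> Poly_Mapping.keys p. Poly_Mapping.keys a \<subseteq> Idx n}"

definition var :: "nat \<Rightarrow> nat \<Rightarrow> 'k::field mpoly" where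
  "var i j = Poly_Mapping.single (Poly_Mapping.single (cpair i j) 1) 1"

definition monom :: "((nat \<times> nat) \<Rightarrow>\<^sub>0 nat) \<Rightarrow> 'k::field mpoly" where
  "monom a = Poly_Mapping.single a 1"

definition ideal_gen :: "'a::comm_ring_1 set \<Rightarrow> 'a set \<Rightarrow> 'a set" where
  "ideal_gen A G = {(\<Sum>g\<in>F. c g * g) | F c. finite F \<and> F \<subseteq> G \<and> (\<forall>g\<in>F. c g \<in> A)}"

definition Jn :: "nat \<Rightarrow> 'k::field mpoly set" where
  "Jn n = ideal_gen (Rn n)
     {var i i * var j j - var i j ^ 2 | i j. i \<in> {1..n} \<and> j \<in> {1..n}}"

text \<open>Integer vectors in Z^(n+1 choose 2), as functions on index pairs.\<close>
definition evec :: "nat \<Rightarrow> nat \<Rightarrow> (nat \<times> nat) \<Rightarrow> int" where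
  "evec i j = (\<lambda>p. if p = cpair i j then 1 else 0)"

definition bracket :: "nat \<Rightarrow> nat \<Rightarrow> nat \<Rightarrow> nat \<Rightarrow> (nat \<times> nat) \<Rightarrow> int" where
  "bracket i j k l = (\<lambda>p. evec i k p + evec j l p - evec i l p - evec j k p)"

definition Lprime :: "nat \<Rightarrow> ((nat \<times> nat) \<Rightarrow> int) set" where
  "Lprime n = {(\<lambda>p. \<Sum>q\<in>{1..n} \<times> {1..n}. c q * bracket (fst q) (snd q) (fst q) (snd q) p)
               | c :: nat \<times> nat \<Rightarrow> int. True}"

definition posp :: "((nat \<times> nat) \<Rightarrow> int) \<Rightarrow> (nat \<times> nat) \<Rightarrow>\<^sub>0 nat" where
  "posp u = Abs_poly_mapping (\<lambda>p. nat (u p))"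

definition negp :: "((nat \<times> nat) \<Rightarrow> int) \<Rightarrow> (nat \<times> nat) \<Rightarrow>\<^sub>0 nat" where
  "negp u = Abs_poly_mapping (\<lambda>p. nat (- u p))"

text \<open>Lattice ideal of a lattice L (mesoprime binomial ideal with lattice L, trivial character).\<close>
definition lattice_ideal :: "nat \<Rightarrow> ((nat \<times> nat) \<Rightarrow> int) set \<Rightarrow> 'k::field mpoly set" where
  "lattice_ideal n L = ideal_gen (Rn n) {monom (posp u) - monom (negp u) | u. u \<in> L}"

end

theory Submission
  imports Defs
begin

text \<open>Give x_ij the multidegree e_i + e_j. Every principal minor x_ii x_jj - x_ij^2 is then
  homogeneous, and modulo J_n it lets one trade a factor x_ij^2 for x_ii x_jj. Hence x^a - x^b
  lies in J_n whenever a and b have the same multidegree and even off-diagonal entries: both are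
  congruent to a purely diagonal monomial, and a diagonal monomial is determined by its
  multidegree. Every generator [ij|ij] = e_ii + e_jj - 2 e_ij of L'_n has multidegree zero and
  even off-diagonal entries, so for u in L'_n the exponents u^+ and u^- satisfy these conditions.
  Conversely each principal minor is the binomial of [ij|ij].\<close>

locale subring =
  fixes A :: "'a::comm_ring_1 set"
  assumes zero_mem: "0 \<in> A" and one_mem: "1 \<in> A"
    and add_mem: "\<And>x y. x \<in> A \<Longrightarrow> y \<in> A \<Longrightarrow> x + y \<in> A"
    and mult_mem: "\<And>x y. x \<in> A \<Longrightarrow> y \<in> A \<Longrightarrow> x * y \<in> A"
    and uminus_mem: "\<And>x. x \<in> A \<Longrightarrow> - x \<in> A"
begin

lemma ideal_gen_linear_combination:
  "finite F \<Longrightarrow> F \<subseteq> G \<Longrightarrow> \<forall>g\<in>F. c g \<in> A \<Longrightarrow> (\<Sum>g\<in>F. c g * g) \<in> ideal_gen A G"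
  unfolding ideal_gen_def by blast

lemma ideal_gen_zero: "0 \<in> ideal_gen A G"
  unfolding ideal_gen_def by (rule CollectI, rule exI[of _ "{}"]) auto

lemma ideal_gen_generator: "g \<in> G \<Longrightarrow> g \<in> ideal_gen A G"
  unfolding ideal_gen_def
  by (rule CollectI, rule exI[of _ "{g}"], rule exI[of _ "\<lambda>_. 1"]) (auto simp: one_mem)

lemma ideal_gen_add:
  assumes "x \<in> ideal_gen A G" "y \<in> ideal_gen A G"
  shows "x + y \<in> ideal_gen A G"
proof -
  obtain F1 c1 where x: "x = (\<Sum>g\<in>F1. c1 g * g)" "finite F1" "F1 \<subseteq> G" "\<forall>g\<in>F1. c1 g \<in> A"
    using assms(1) unfolding ideal_gen_def by blast
  obtain F2 c2 where y: "y = (\<Sum>g\<in>F2. c2 g * g)" "finite F2" "F2 \<subseteq> G" "\<forall>g\<in>F2. c2 g \<in> A"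
    using assms(2) unfolding ideal_gen_def by blast
  define d1 where "d1 g = (if g \<in> F1 then c1 g else 0)" for g
  define d2 where "d2 g = (if g \<in> F2 then c2 g else 0)" for g
  have "x = (\<Sum>g\<in>F1 \<union> F2. d1 g * g)"
    unfolding x(1) d1_def by (rule sum.mono_neutral_cong_left) (use x y in auto)
  moreover have "y = (\<Sum>g\<in>F1 \<union> F2. d2 g * g)"
    unfolding y(1) d2_def by (rule sum.mono_neutral_cong_left) (use x y in auto)
  ultimately have "x + y = (\<Sum>g\<in>F1 \<union> F2. (d1 g + d2 g) * g)"
    by (simp add: sum.distrib distrib_right)
  moreover have "\<forall>g\<in>F1 \<union> F2. d1 g + d2 g \<in> A"
    using x y by (auto simp: d1_def d2_def intro!: add_mem zero_mem)
  ultimately show ?thesis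
    using x y by (simp add: ideal_gen_linear_combination)
qed

lemma ideal_gen_mult:
  assumes "r \<in> A" "x \<in> ideal_gen A G"
  shows "r * x \<in> ideal_gen A G"
proof -
  obtain F c where x: "x = (\<Sum>g\<in>F. c g * g)" "finite F" "F \<subseteq> G" "\<forall>g\<in>F. c g \<in> A"
    using assms(2) unfolding ideal_gen_def by blast
  have "r * x = (\<Sum>g\<in>F. (r * c g) * g)"
    unfolding x(1) by (simp add: sum_distrib_left mult.assoc)
  moreover have "\<forall>g\<in>F. r * c g \<in> A"
    using x assms(1) by (auto intro: mult_mem)
  ultimately show ?thesis
    using x by (simp add: ideal_gen_linear_combination)
qed

lemma ideal_gen_diff:
  assumes "x \<in> ideal_gen A G" "y \<in> ideal_gen A G"
  shows "x - y \<in> ideal_gen A G"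
  using ideal_gen_add[OF assms(1) ideal_gen_mult[OF uminus_mem[OF one_mem] assms(2)]] by simp

lemma ideal_gen_sum:
  "finite F \<Longrightarrow> (\<And>g. g \<in> F \<Longrightarrow> f g \<in> ideal_gen A G) \<Longrightarrow> (\<Sum>g\<in>F. f g) \<in> ideal_gen A G"
  by (induction F rule: finite_induct) (auto intro: ideal_gen_zero ideal_gen_add)

lemma ideal_gen_minimal:
  assumes "G \<subseteq> ideal_gen A H"
  shows "ideal_gen A G \<subseteq> ideal_gen A H"
proof
  fix x assume "x \<in> ideal_gen A G"
  then obtain F c where x: "x = (\<Sum>g\<in>F. c g * g)" "finite F" "F \<subseteq> G" "\<forall>g\<in>F. c g \<in> A"
    unfolding ideal_gen_def by blast
  show "x \<in> ideal_gen A H"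
    unfolding x(1) using x(2-4) assms by (intro ideal_gen_sum ideal_gen_mult) auto
qed

end

lemma Rn_mult:
  assumes "x \<in> Rn n" "y \<in> Rn n"
  shows "(x :: 'k::field mpoly) * y \<in> Rn n"
  unfolding Rn_def
proof (rule CollectI, rule ballI)
  fix a assume "a \<in> Poly_Mapping.keys (x * y)"
  then obtain b c where "a = b + c" "b \<in> Poly_Mapping.keys x" "c \<in> Poly_Mapping.keys y"
    using keys_mult[of x y] by blast
  then show "Poly_Mapping.keys a \<subseteq> Idx n"
    using assms keys_add[of b c] unfolding Rn_def by blast
qed

interpretation Rn: subring "Rn n :: 'k::field mpoly set" for n
proof
  fix x y :: "'k mpoly"
  show "x \<in> Rn n \<Longrightarrow> y \<in> Rn n \<Longrightarrow> x + y \<in> Rn n"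
    using keys_add[of x y] unfolding Rn_def by blast
  show "x \<in> Rn n \<Longrightarrow> y \<in> Rn n \<Longrightarrow> x * y \<in> Rn n"
    by (rule Rn_mult)
qed (auto simp: Rn_def)

lemma monom_in_Rn: "Poly_Mapping.keys a \<subseteq> Idx n \<Longrightarrow> (monom a :: 'k::field mpoly) \<in> Rn n"
  by (simp add: Rn_def monom_def)

lemma monom_mult: "(monom a :: 'k::field mpoly) * monom b = monom (a + b)"
  by (simp add: monom_def mult_single)

lemma var_eq_monom: "(var i j :: 'k::field mpoly) = monom (Poly_Mapping.single (cpair i j) 1)"
  by (simp add: var_def monom_def)

lemma var_square: "(var i j :: 'k::field mpoly) ^ 2 = monom (Poly_Mapping.single (cpair i j) 2)"
  by (simp only: power2_eq_square var_eq_monom monom_mult single_add[symmetric] one_add_one)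

lemma finite_Idx: "finite (Idx n)"
  by (rule finite_subset[of _ "{1..n} \<times> {1..n}"]) (auto simp: Idx_def)

lemma cpair_in_Idx: "i \<in> {1..n} \<Longrightarrow> j \<in> {1..n} \<Longrightarrow> cpair i j \<in> Idx n"
  by (auto simp: cpair_def Idx_def)

lemma cpair_commute: "cpair i j = cpair j i"
  by (simp add: cpair_def min.commute max.commute)

definition index_deg :: "nat \<Rightarrow> nat \<times> nat \<Rightarrow> nat" where
  "index_deg k p = (if fst p = k then 1 else 0) + (if snd p = k then 1 else 0)"

definition multideg :: "nat \<Rightarrow> ((nat \<times> nat) \<Rightarrow>\<^sub>0 nat) \<Rightarrow> nat \<Rightarrow> nat" where
  "multideg n a k = (\<Sum>p\<in>Idx n. Poly_Mapping.lookup a p * index_deg k p)"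

definition offdiag_deg :: "nat \<Rightarrow> ((nat \<times> nat) \<Rightarrow>\<^sub>0 nat) \<Rightarrow> nat" where
  "offdiag_deg n a = (\<Sum>p\<in>Idx n. if fst p \<noteq> snd p then Poly_Mapping.lookup a p else 0)"

definition even_offdiag :: "((nat \<times> nat) \<Rightarrow>\<^sub>0 nat) \<Rightarrow> bool" where
  "even_offdiag a \<longleftrightarrow> (\<forall>p. fst p \<noteq> snd p \<longrightarrow> even (Poly_Mapping.lookup a p))"

lemma multideg_add: "multideg n (a + b) k = multideg n a k + multideg n b k"
  by (simp add: multideg_def lookup_add sum.distrib distrib_right)

lemma offdiag_deg_add: "offdiag_deg n (a + b) = offdiag_deg n a + offdiag_deg n b"
  by (auto simp: offdiag_deg_def lookup_add sum.distrib[symmetric] intro!: sum.cong)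

lemma multideg_single:
  assumes "q \<in> Idx n"
  shows "multideg n (Poly_Mapping.single q m) k = m * index_deg k q"
proof -
  have "multideg n (Poly_Mapping.single q m) k = (\<Sum>p\<in>Idx n. if p = q then m * index_deg k q else 0)"
    unfolding multideg_def by (rule sum.cong) (auto simp: lookup_single when_def)
  then show ?thesis using assms finite_Idx by simp
qed

lemma offdiag_deg_single:
  assumes "q \<in> Idx n"
  shows "offdiag_deg n (Poly_Mapping.single q m) = (if fst q \<noteq> snd q then m else 0)"
proof -
  have "offdiag_deg n (Poly_Mapping.single q m) =
      (\<Sum>p\<in>Idx n. if p = q then (if fst q \<noteq> snd q then m else 0) else 0)"
    unfolding offdiag_deg_def by (rule sum.cong) (auto simp: lookup_single when_def)
  then show ?thesis using assms finite_Idx by simp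
qed

lemma Jn_offdiag_square_swap:
  assumes "(i, j) \<in> Idx n" and "Poly_Mapping.keys c \<subseteq> Idx n"
  shows "(monom (c + Poly_Mapping.single (i, i) 1 + Poly_Mapping.single (j, j) 1)
           - monom (c + Poly_Mapping.single (i, j) 2) :: 'k::field mpoly) \<in> Jn n"
proof -
  have ij: "i \<le> j" "i \<in> {1..n}" "j \<in> {1..n}" using assms(1) by (auto simp: Idx_def)
  then have cpairs: "cpair i j = (i, j)" "cpair i i = (i, i)" "cpair j j = (j, j)"
    by (auto simp: cpair_def)
  have "(var i i * var j j - var i j ^ 2 :: 'k mpoly) \<in> Jn n"
    unfolding Jn_def using ij by (intro Rn.ideal_gen_generator) blast
  then have "monom c * (var i i * var j j - var i j ^ 2 :: 'k mpoly) \<in> Jn n"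
    unfolding Jn_def using monom_in_Rn[OF assms(2)] by (rule Rn.ideal_gen_mult[rotated])
  moreover have "monom c * (var i i * var j j - var i j ^ 2 :: 'k mpoly) =
      monom (c + Poly_Mapping.single (i, i) 1 + Poly_Mapping.single (j, j) 1)
      - monom (c + Poly_Mapping.single (i, j) 2)"
    unfolding var_square unfolding var_eq_monom cpairs right_diff_distrib monom_mult by (simp add: add.assoc)
  ultimately show ?thesis by simp
qed

lemma offdiag_square_factor:
  assumes pos: "offdiag_deg n a > 0" and keys: "Poly_Mapping.keys a \<subseteq> Idx n"
    and even: "even_offdiag a"
  obtains i j c where "(i, j) \<in> Idx n" "i \<noteq> j" "Poly_Mapping.keys c \<subseteq> Idx n"
    "even_offdiag c" "a = c + Poly_Mapping.single (i, j) 2"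
proof -
  have "\<exists>p\<in>Idx n. fst p \<noteq> snd p \<and> Poly_Mapping.lookup a p \<noteq> 0"
  proof (rule ccontr)
    assume "\<not> ?thesis"
    then have "offdiag_deg n a = 0"
      unfolding offdiag_deg_def by (auto intro!: sum.neutral)
    with pos show False by simp
  qed
  then obtain i j where ij: "(i, j) \<in> Idx n" "i \<noteq> j" "Poly_Mapping.lookup a (i, j) \<noteq> 0"
    by auto
  moreover have "even (Poly_Mapping.lookup a (i, j))"
    using even ij(2) unfolding even_offdiag_def by auto
  ultimately have "Poly_Mapping.lookup a (i, j) \<ge> 2"
    by presburger
  define c where "c = a - Poly_Mapping.single (i, j) 2"
  have lookup_c: "Poly_Mapping.lookup c q = Poly_Mapping.lookup a q - (if q = (i, j) then 2 else 0)" for q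
    by (simp add: c_def lookup_minus lookup_single when_def)
  show thesis
  proof
    show "Poly_Mapping.keys c \<subseteq> Idx n"
    proof
      fix q assume "q \<in> Poly_Mapping.keys c"
      then have "Poly_Mapping.lookup a q \<noteq> 0" by (auto simp: in_keys_iff lookup_c)
      then show "q \<in> Idx n" using keys by (auto simp: in_keys_iff)
    qed
    show "even_offdiag c"
      using even unfolding even_offdiag_def by (simp add: lookup_c)
    show "a = c + Poly_Mapping.single (i, j) 2"
      by (rule poly_mapping_eqI) (use \<open>_ \<ge> 2\<close> in \<open>auto simp: lookup_c lookup_add lookup_single when_def\<close>)
  qed (use ij in auto)
qed

lemma offdiag_reduction:
  assumes "offdiag_deg n a > 0" "Poly_Mapping.keys a \<subseteq> Idx n" "even_offdiag a"
  obtains a' where "Poly_Mapping.keys a' \<subseteq> Idx n" "even_offdiag a'" "multideg n a' = multideg n a"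
    "offdiag_deg n a' < offdiag_deg n a" "(monom a' - monom a :: 'k::field mpoly) \<in> Jn n"
proof -
  obtain i j c where ij: "(i, j) \<in> Idx n" "i \<noteq> j" and c: "Poly_Mapping.keys c \<subseteq> Idx n"
    "even_offdiag c" and a: "a = c + Poly_Mapping.single (i, j) 2"
    using offdiag_square_factor[OF assms] .
  have diag: "(i, i) \<in> Idx n" "(j, j) \<in> Idx n" using ij(1) by (auto simp: Idx_def)
  define a' where "a' = c + Poly_Mapping.single (i, i) 1 + Poly_Mapping.single (j, j) 1"
  show thesis
  proof
    show "Poly_Mapping.keys a' \<subseteq> Idx n"
      unfolding a'_def using c(1) diag by (auto dest!: set_mp[OF keys_add] split: if_splits)
    show "even_offdiag a'"
      using c(2) unfolding even_offdiag_def a'_def by (auto simp: lookup_add lookup_single when_def)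
    show "multideg n a' = multideg n a"
      unfolding a'_def a using diag ij(1) by (auto simp: multideg_add multideg_single index_deg_def)
    show "offdiag_deg n a' < offdiag_deg n a"
      unfolding a'_def a offdiag_deg_add using diag ij by (simp add: offdiag_deg_single)
    show "(monom a' - monom a :: 'k mpoly) \<in> Jn n"
      unfolding a'_def a using Jn_offdiag_square_swap[OF ij(1) c(1)] .
  qed
qed

lemma diagonal_representative:
  "Poly_Mapping.keys a \<subseteq> Idx n \<Longrightarrow> even_offdiag a \<Longrightarrow>
    \<exists>d. Poly_Mapping.keys d \<subseteq> Idx n \<and> offdiag_deg n d = 0 \<and> multideg n d = multideg n a
      \<and> (monom d - monom a :: 'k::field mpoly) \<in> Jn n"
proof (induction "offdiag_deg n a" arbitrary: a rule: less_induct)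
  case less
  show ?case
  proof (cases "offdiag_deg n a = 0")
    case True
    then show ?thesis
      using less.prems Rn.ideal_gen_zero unfolding Jn_def by (intro exI[of _ a]) auto
  next
    case False
    then obtain a' where a': "Poly_Mapping.keys a' \<subseteq> Idx n" "even_offdiag a'"
      "multideg n a' = multideg n a" "offdiag_deg n a' < offdiag_deg n a"
      "(monom a' - monom a :: 'k mpoly) \<in> Jn n"
      using offdiag_reduction less.prems by blast
    obtain d where d: "Poly_Mapping.keys d \<subseteq> Idx n" "offdiag_deg n d = 0"
      "multideg n d = multideg n a'" "(monom d - monom a' :: 'k mpoly) \<in> Jn n"
      using less.hyps[OF a'(4) a'(1,2)] by blast
    have "(monom d - monom a') + (monom a' - monom a :: 'k mpoly) \<in> Jn n"
      using d(4) a'(5) unfolding Jn_def by (rule Rn.ideal_gen_add)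
    then show ?thesis
      using d a' by auto
  qed
qed

lemma diagonal_eq_by_multideg:
  assumes "offdiag_deg n a = 0" "Poly_Mapping.keys a \<subseteq> Idx n"
    and "offdiag_deg n b = 0" "Poly_Mapping.keys b \<subseteq> Idx n"
    and "multideg n a = multideg n b"
  shows "a = b"
proof -
  have offdiag_zero: "Poly_Mapping.lookup x q = 0"
    if "offdiag_deg n x = 0" "q \<in> Idx n" "fst q \<noteq> snd q" for x q
    using that finite_Idx unfolding offdiag_deg_def by (metis (mono_tags, lifting) sum_eq_0_iff)
  have multideg_diag: "multideg n x k = 2 * Poly_Mapping.lookup x (k, k)"
    if "offdiag_deg n x = 0" "(k, k) \<in> Idx n" for x k
  proof -
    have "multideg n x k = (\<Sum>p\<in>Idx n. if p = (k, k) then 2 * Poly_Mapping.lookup x (k, k) else 0)"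
      unfolding multideg_def
      by (rule sum.cong) (auto simp: index_deg_def offdiag_zero[OF that(1)])
    then show ?thesis using that(2) finite_Idx by simp
  qed
  show ?thesis
  proof (rule poly_mapping_eqI)
    fix q :: "nat \<times> nat"
    consider "q \<notin> Idx n" | "q \<in> Idx n" "fst q \<noteq> snd q" | k where "q = (k, k)" "(k, k) \<in> Idx n"
      by (cases q) auto
    then show "Poly_Mapping.lookup a q = Poly_Mapping.lookup b q"
    proof cases
      case 1
      then have "q \<notin> Poly_Mapping.keys a" "q \<notin> Poly_Mapping.keys b"
        using assms(2,4) by blast+
      then show ?thesis by (simp add: in_keys_iff)
    next
      case 2
      then show ?thesis using offdiag_zero assms(1,3) by simp
    next
      case 3
      then show ?thesis using multideg_diag[of a k] multideg_diag[of b k] assms by simp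
    qed
  qed
qed

lemma monom_diff_in_Jn:
  assumes "Poly_Mapping.keys a \<subseteq> Idx n" "even_offdiag a"
    and "Poly_Mapping.keys b \<subseteq> Idx n" "even_offdiag b"
    and "multideg n a = multideg n b"
  shows "(monom a - monom b :: 'k::field mpoly) \<in> Jn n"
proof -
  obtain da where da: "Poly_Mapping.keys da \<subseteq> Idx n" "offdiag_deg n da = 0"
    "multideg n da = multideg n a" "(monom da - monom a :: 'k mpoly) \<in> Jn n"
    using diagonal_representative assms(1,2) by blast
  obtain db where db: "Poly_Mapping.keys db \<subseteq> Idx n" "offdiag_deg n db = 0"
    "multideg n db = multideg n b" "(monom db - monom b :: 'k mpoly) \<in> Jn n"
    using diagonal_representative assms(3,4) by blast
  have "da = db"
    using da db assms(5) by (intro diagonal_eq_by_multideg) auto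
  have "(monom db - monom b) - (monom da - monom a :: 'k mpoly) \<in> Jn n"
    using db(4) da(4) unfolding Jn_def by (rule Rn.ideal_gen_diff)
  then show ?thesis
    using \<open>da = db\<close> by simp
qed

lemma sum_indicator_mult:
  assumes "finite A" "q \<in> A"
  shows "(\<Sum>p\<in>A. (if p = q then 1 else 0) * f p) = (f q :: 'a::comm_ring_1)"
proof -
  have "(\<Sum>p\<in>A. (if p = q then 1 else 0) * f p) = (\<Sum>p\<in>A. if p = q then f p else 0)"
    by (rule sum.cong) auto
  then show ?thesis using assms by simp
qed

lemma evec_commute: "evec j i = evec i j"
  by (simp add: evec_def cpair_commute)

lemma bracket_diag_eq:
  "bracket i j i j p = (if p = cpair i i then 1 else 0) + (if p = cpair j j then 1 else 0)
     - 2 * (if p = cpair i j then 1 else 0)"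
  unfolding bracket_def evec_commute[of j i] by (simp add: evec_def)

lemma index_deg_cpair: "index_deg k (cpair i j) = (if i = k then 1 else 0) + (if j = k then 1 else 0)"
  by (auto simp: index_deg_def cpair_def min_def max_def)

lemma Lprime_elem:
  assumes "u \<in> Lprime n"
  obtains c where "u = (\<lambda>p. \<Sum>q\<in>{1..n} \<times> {1..n}. c q * bracket (fst q) (snd q) (fst q) (snd q) p)"
  using assms unfolding Lprime_def by blast

lemma Lprime_vanishes_outside_Idx:
  assumes "u \<in> Lprime n" "p \<notin> Idx n"
  shows "u p = 0"
proof -
  have "bracket i j i j p = 0" if "i \<in> {1..n}" "j \<in> {1..n}" for i j
    using assms(2) cpair_in_Idx[OF that(1) that(1)] cpair_in_Idx[OF that(2) that(2)]
      cpair_in_Idx[OF that] by (auto simp: bracket_diag_eq)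
  then show ?thesis
    using assms(1) by (elim Lprime_elem) (auto intro!: sum.neutral)
qed

lemma Lprime_offdiag_even:
  assumes "u \<in> Lprime n" "fst p \<noteq> snd p"
  shows "even (u p)"
proof -
  have "p \<noteq> cpair i i" for i using assms(2) by (auto simp: cpair_def)
  then have "even (bracket i j i j p)" for i j by (simp add: bracket_diag_eq)
  then show ?thesis
    using assms(1) by (elim Lprime_elem) (auto intro!: dvd_sum)
qed

lemma Lprime_multideg_zero:
  assumes "u \<in> Lprime n"
  shows "(\<Sum>p\<in>Idx n. u p * int (index_deg k p)) = 0"
proof -
  have weight: "(\<Sum>p\<in>Idx n. (if p = cpair i j then 1 else 0) * int (index_deg k p))
      = int (index_deg k (cpair i j))" if "i \<in> {1..n}" "j \<in> {1..n}" for i j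
    by (rule sum_indicator_mult[OF finite_Idx cpair_in_Idx[OF that]])
  have bracket_weight: "(\<Sum>p\<in>Idx n. bracket i j i j p * int (index_deg k p)) = 0"
    if "i \<in> {1..n}" "j \<in> {1..n}" for i j
    unfolding bracket_diag_eq left_diff_distrib distrib_right sum.distrib sum_subtractf
      mult.assoc sum_distrib_left[symmetric]
    using that by (simp add: weight index_deg_cpair)
  obtain c where u: "u = (\<lambda>p. \<Sum>q\<in>{1..n} \<times> {1..n}. c q * bracket (fst q) (snd q) (fst q) (snd q) p)"
    using assms by (rule Lprime_elem)
  have "(\<Sum>p\<in>Idx n. u p * int (index_deg k p)) =
      (\<Sum>q\<in>{1..n} \<times> {1..n}. c q * (\<Sum>p\<in>Idx n. bracket (fst q) (snd q) (fst q) (snd q) p * int (index_deg k p)))"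
    unfolding u sum_distrib_right sum_distrib_left mult.assoc by (rule sum.swap)
  also have "\<dots> = 0"
    by (auto intro!: sum.neutral simp: bracket_weight)
  finally show ?thesis .
qed

lemma lookup_posp: "u \<in> Lprime n \<Longrightarrow> Poly_Mapping.lookup (posp u) = (\<lambda>p. nat (u p))"
  unfolding posp_def
  by (rule lookup_Abs_poly_mapping, rule finite_subset[OF _ finite_Idx[of n]])
    (use Lprime_vanishes_outside_Idx[of u n] in force)

lemma lookup_negp: "u \<in> Lprime n \<Longrightarrow> Poly_Mapping.lookup (negp u) = (\<lambda>p. nat (- u p))"
  unfolding negp_def
  by (rule lookup_Abs_poly_mapping, rule finite_subset[OF _ finite_Idx[of n]])
    (use Lprime_vanishes_outside_Idx[of u n] in force)

lemma even_nat_of_even: "even (x :: int) \<Longrightarrow> even (nat x)"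
  by (cases "x \<ge> 0") (auto simp: even_nat_iff)

lemma lattice_binomial_in_Jn:
  assumes u: "u \<in> Lprime n"
  shows "(monom (posp u) - monom (negp u) :: 'k::field mpoly) \<in> Jn n"
proof (rule monom_diff_in_Jn)
  show "Poly_Mapping.keys (posp u) \<subseteq> Idx n" "Poly_Mapping.keys (negp u) \<subseteq> Idx n"
    using Lprime_vanishes_outside_Idx[OF u]
    by (force simp: in_keys_iff lookup_posp[OF u] lookup_negp[OF u])+
  show "even_offdiag (posp u)" "even_offdiag (negp u)"
    unfolding even_offdiag_def lookup_posp[OF u] lookup_negp[OF u]
    using Lprime_offdiag_even[OF u] by (auto intro: even_nat_of_even)
  show "multideg n (posp u) = multideg n (negp u)"
  proof
    fix k
    have "int (multideg n (posp u) k) - int (multideg n (negp u) k) =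
        (\<Sum>p\<in>Idx n. (int (nat (u p)) - int (nat (- u p))) * int (index_deg k p))"
      unfolding multideg_def lookup_posp[OF u] lookup_negp[OF u]
      by (simp add: sum_subtractf[symmetric] left_diff_distrib)
    also have "\<dots> = (\<Sum>p\<in>Idx n. u p * int (index_deg k p))"
      by (rule sum.cong) simp_all
    also have "\<dots> = 0"
      by (rule Lprime_multideg_zero[OF u])
    finally show "multideg n (posp u) k = multideg n (negp u) k" by simp
  qed
qed

lemma bracket_in_Lprime:
  assumes "i \<in> {1..n}" "j \<in> {1..n}"
  shows "bracket i j i j \<in> Lprime n"
proof -
  define c :: "nat \<times> nat \<Rightarrow> int" where "c q = (if q = (i, j) then 1 else 0)" for q
  have "bracket i j i j = (\<lambda>p. \<Sum>q\<in>{1..n} \<times> {1..n}. c q * bracket (fst q) (snd q) (fst q) (snd q) p)"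
    using assms unfolding c_def by (subst sum_indicator_mult) auto
  then show ?thesis unfolding Lprime_def by blast
qed

lemma principal_minor_in_lattice_ideal:
  assumes ij: "i \<in> {1..n}" "j \<in> {1..n}"
  shows "(var i i * var j j - var i j ^ 2 :: 'k::field mpoly) \<in> lattice_ideal n (Lprime n)"
proof (cases "i = j")
  case True
  then show ?thesis unfolding lattice_ideal_def by (simp add: power2_eq_square Rn.ideal_gen_zero)
next
  case False
  define u where "u = bracket i j i j"
  have uL: "u \<in> Lprime n" unfolding u_def using ij by (rule bracket_in_Lprime)
  have distinct: "cpair i i \<noteq> cpair j j" "cpair i i \<noteq> cpair i j" "cpair j j \<noteq> cpair i j"
    using False by (auto simp: cpair_def min_def max_def)
  have u: "u p = (if p = cpair i i then 1 else 0) + (if p = cpair j j then 1 else 0)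
      - 2 * (if p = cpair i j then 1 else 0)" for p
    unfolding u_def by (rule bracket_diag_eq)
  have "posp u = Poly_Mapping.single (cpair i i) 1 + Poly_Mapping.single (cpair j j) 1"
    by (rule poly_mapping_eqI)
      (use distinct in \<open>auto simp: lookup_posp[OF uL] u lookup_add lookup_single when_def\<close>)
  moreover have "negp u = Poly_Mapping.single (cpair i j) 2"
    by (rule poly_mapping_eqI)
      (use distinct in \<open>auto simp: lookup_negp[OF uL] u lookup_single when_def\<close>)
  ultimately have "(var i i * var j j - var i j ^ 2 :: 'k mpoly) = monom (posp u) - monom (negp u)"
    unfolding var_square unfolding var_eq_monom monom_mult by simp
  then show ?thesis
    unfolding lattice_ideal_def using uL by (auto intro: Rn.ideal_gen_generator)
qed

theorem proposition2p4:
  assumes "n \<ge> 2"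
  shows "(Jn n :: 'k::field mpoly set) = lattice_ideal n (Lprime n)"
proof
  show "(Jn n :: 'k::field mpoly set) \<subseteq> lattice_ideal n (Lprime n)"
    unfolding Jn_def lattice_ideal_def
    by (rule Rn.ideal_gen_minimal)
      (use principal_minor_in_lattice_ideal[where 'k='k, of _ n, unfolded lattice_ideal_def] in blast)
  show "lattice_ideal n (Lprime n) \<subseteq> (Jn n :: 'k::field mpoly set)"
    unfolding lattice_ideal_def Jn_def
    by (rule Rn.ideal_gen_minimal)
      (use lattice_binomial_in_Jn[where 'k='k, of _ n, unfolded Jn_def] in blast)
qed

end
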